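(* Let $K_c=\operatorname{conv}\big(\mathbb{S}^{d-1}\cup\{\boldsymbol v_i\mid i\in I\}\big)\subset\mathbb{E}^d$ be a cap body and $i\in I$. Then the vertex $\boldsymbol v_i$ is illuminated by the direction $\boldsymbol u\in\mathbb{S}^{d-1}$ if and only if the closed spherical cap $C_i=\{\boldsymbol p\in\mathbb{S}^{d-1}\mid\langle\boldsymbol p,\boldsymbol v_i\rangle\ge 1\}$ is contained in the open hemisphere $\operatorname{Hem}_{-\boldsymbol u}$.
   Context: $\mathbb{S}^{d-1}$ is the unit sphere centred at the origin and $B^d$ the closed unit ball. A cap body is $\operatorname{conv}(\mathbb{S}^{d-1}\cup\{\boldsymbol v_i\mid i\in I\})$ where $\{\boldsymbol v_i\}$ is a countable subset of $\mathbb{E}^d\setminus B^d$ such that for distinct $i,j$ the segment $\overline{\boldsymbol v_i\boldsymbol v_j}$ intersects $B^d$; the $\boldsymbol v_i$ are its vertices. A direction $\boldsymbol u\in\mathbb{S}^{d-1}$ illuminates a boundary point $\boldsymbol p$ of $K_c$ if $\boldsymbol p+\lambda\boldsymbol u$ is in the interior of $K_c$ for some $\lambda>0$. For a unit vector $\boldsymbol w$, $\operatorname{Hem}_{\boldsymbol w}=\{\boldsymbol x\in\mathbb{S}^{d-1}\mid\langle\boldsymbol x,\boldsymbol w\rangle>0\}$. *)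

theory Defs
  imports "HOL-Analysis.Analysis"
begin

definition cap_body_vertices :: "'a::euclidean_space set \<Rightarrow> bool" where
  "cap_body_vertices V \<longleftrightarrow> countable V \<and> V \<inter> cball 0 1 = {} \<and>
     (\<forall>v\<in>V. \<forall>w\<in>V. v \<noteq> w \<longrightarrow> closed_segment v w \<inter> cball 0 1 \<noteq> {})"

definition cap_body :: "'a::euclidean_space set \<Rightarrow> 'a set" where
  "cap_body V = convex hull (sphere 0 1 \<union> V)"

definition illuminates :: "'a::euclidean_space set \<Rightarrow> 'a \<Rightarrow> 'a \<Rightarrow> bool" where
  "illuminates K u p \<longleftrightarrow> (\<exists>t>0. p + t *\<^sub>R u \<in> interior K)"

definition Hem :: "'a::euclidean_space \<Rightarrow> 'a set" where
  "Hem w = {x \<in> sphere 0 1. x \<bullet> w > 0}"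

definition cap_of :: "'a::euclidean_space \<Rightarrow> 'a set" where
  "cap_of v = {p \<in> sphere 0 1. p \<bullet> v \<ge> 1}"

end

theory Submission
  imports Defs
begin

text \<open>For \<open>p\<close> in the cap \<open>C\<^sub>v\<close> the half-space \<open>p \<bullet> y \<le> p \<bullet> v\<close> contains the unit ball
  (as \<open>p \<bullet> v \<ge> 1\<close>) and every other vertex \<open>w\<close>: otherwise the whole segment from \<open>v\<close> to \<open>w\<close>
  apart from \<open>v\<close> would lie beyond the hyperplane \<open>p \<bullet> y = 1\<close>, missing the ball. So the
  cap body lies in the half-space, and a direction \<open>u\<close> with \<open>p \<bullet> u \<ge> 0\<close> cannot move \<open>v\<close>
  into the interior. Conversely, if \<open>p \<bullet> u < 0\<close> on the whole cap, the point of the ray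
  \<open>v + s u\<close> closest to the origin lies in the open unit ball, which is interior to the body.\<close>

lemma cball_subset_cap_body: "cball 0 1 \<subseteq> cap_body V"
proof -
  have "cball (0::'a) 1 = convex hull (frontier (cball 0 1))"
    by (rule Krein_Milman_frontier) auto
  also have "\<dots> \<subseteq> cap_body V"
    unfolding cap_body_def by (rule hull_mono) auto
  finally show ?thesis .
qed

lemma ball_subset_interior_cap_body: "ball 0 1 \<subseteq> interior (cap_body V)"
  using cball_subset_cap_body[of V] by (intro interior_maximal) auto

lemma cap_body_vertex_norm_gt: "cap_body_vertices V \<Longrightarrow> v \<in> V \<Longrightarrow> norm v > 1"
  unfolding cap_body_vertices_def by auto

lemma inner_le_one_if_norm_le_one:
  fixes p y :: "'a::euclidean_space"
  assumes "norm p = 1" "norm y \<le> 1"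
  shows "p \<bullet> y \<le> 1"
  using Cauchy_Schwarz_ineq2[of p y] assms mult_left_le[of "norm y" "norm p"] by simp

lemma cap_inner_vertex_le:
  assumes V: "cap_body_vertices V" and "v \<in> V" "w \<in> V" and p: "p \<in> cap_of v"
  shows "p \<bullet> w \<le> p \<bullet> v"
proof (rule ccontr)
  assume gt: "\<not> p \<bullet> w \<le> p \<bullet> v"
  then have "w \<noteq> v" by auto
  then obtain y where y: "y \<in> closed_segment v w" "norm y \<le> 1"
    using V \<open>v \<in> V\<close> \<open>w \<in> V\<close> unfolding cap_body_vertices_def by fastforce
  then obtain a where a: "0 \<le> a" "a \<le> 1" "y = (1 - a) *\<^sub>R v + a *\<^sub>R w"
    unfolding closed_segment_def by auto
  have "p \<bullet> y = p \<bullet> v + a * (p \<bullet> w - p \<bullet> v)"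
    unfolding a(3) by (simp add: inner_add_right algebra_simps)
  moreover have "p \<bullet> y \<le> p \<bullet> v"
    using inner_le_one_if_norm_le_one[OF _ y(2)] p unfolding cap_of_def by force
  ultimately have "a * (p \<bullet> w - p \<bullet> v) \<le> 0"
    by linarith
  then have "a = 0"
    using gt a by (simp add: mult_le_0_iff)
  then have "y = v" using a by simp
  then show False
    using y cap_body_vertex_norm_gt[OF V \<open>v \<in> V\<close>] by simp
qed

lemma cap_body_subset_halfspace:
  assumes "cap_body_vertices V" "v \<in> V" "p \<in> cap_of v"
  shows "cap_body V \<subseteq> {y. p \<bullet> y \<le> p \<bullet> v}"
  unfolding cap_body_def
proof (rule hull_minimal)
  have "p \<bullet> y \<le> p \<bullet> v" if "norm y = 1" for y
    using inner_le_one_if_norm_le_one[of p y] that assms(3) unfolding cap_of_def by force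
  then show "sphere 0 1 \<union> V \<subseteq> {y. p \<bullet> y \<le> p \<bullet> v}"
    using cap_inner_vertex_le[OF assms(1,2) _ assms(3)] by auto
qed (rule convex_halfspace_le)

lemma ray_enters_ball_if_cap_in_Hem:
  fixes v u :: "'a::euclidean_space"
  assumes u: "norm u = 1" and v: "norm v > 1" and cap: "cap_of v \<subseteq> Hem (- u)"
  shows "\<exists>s>0. norm (v + s *\<^sub>R u) < 1"
proof -
  define s where "s = max 0 (- (v \<bullet> u))"
  define m where "m = v + s *\<^sub>R u"
  have "u \<bullet> u = 1" using u by (simp add: dot_square_norm)
  then have mu: "m \<bullet> u \<ge> 0" and "s * (m \<bullet> u) = 0"
    by (auto simp: m_def s_def inner_add_left max_def)
  then have mv: "m \<bullet> v = norm m ^ 2"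
    by (simp add: m_def inner_add_right dot_square_norm[symmetric])
  have "norm m < 1"
  proof (rule ccontr)
    assume "\<not> norm m < 1"
    moreover from this have "m \<noteq> 0"
      by auto
    ultimately have "sgn m \<in> cap_of v"
      using mv by (simp add: cap_of_def norm_sgn sgn_div_norm power2_eq_square field_simps)
    moreover have "sgn m \<bullet> u \<ge> 0"
      using mu by (simp add: sgn_div_norm)
    ultimately show False
      using cap unfolding Hem_def by auto
  qed
  moreover have "s \<noteq> 0"
    using calculation v by (auto simp: m_def)
  then have "s > 0"
    unfolding s_def by (simp add: max_def split: if_splits)
  ultimately show ?thesis
    unfolding m_def by blast
qed

theorem lemma4:
  fixes V :: "'a::euclidean_space set" and v u :: 'a
  assumes "cap_body_vertices V"
    and "v \<in> V"
    and "u \<in> sphere 0 1"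
  shows "illuminates (cap_body V) u v \<longleftrightarrow> cap_of v \<subseteq> Hem (- u)"
proof
  assume "illuminates (cap_body V) u v"
  then obtain t where "t > 0" and t: "v + t *\<^sub>R u \<in> interior (cap_body V)"
    unfolding illuminates_def by auto
  show "cap_of v \<subseteq> Hem (- u)"
  proof
    fix p assume p: "p \<in> cap_of v"
    then have "p \<noteq> 0" unfolding cap_of_def by auto
    then have "interior (cap_body V) \<subseteq> {y. p \<bullet> y < p \<bullet> v}"
      using interior_mono[OF cap_body_subset_halfspace[OF assms(1,2) p]] by simp
    then have "p \<bullet> v + t * (p \<bullet> u) < p \<bullet> v"
      using t by (auto simp: inner_add_right)
    then have "p \<bullet> u < 0"
      using \<open>t > 0\<close> by (simp add: mult_less_0_iff)
    then show "p \<in> Hem (- u)"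
      using p unfolding Hem_def cap_of_def by simp
  qed
next
  assume cap: "cap_of v \<subseteq> Hem (- u)"
  have "norm u = 1"
    using assms(3) by simp
  then obtain s where "s > 0" "v + s *\<^sub>R u \<in> ball 0 1"
    using ray_enters_ball_if_cap_in_Hem[OF _ cap_body_vertex_norm_gt[OF assms(1,2)] cap] by auto
  then show "illuminates (cap_body V) u v"
    using ball_subset_interior_cap_body[of V] unfolding illuminates_def by blast
qed

end
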